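(* For all $M,H\in\mathbb N$ and $x\in X$ there is a set $\Lambda\subseteq\mathbb N$ such that (1) $\lim_{N\to\infty}\frac1N\#(\{1,\dots,N\}\cap\Lambda)=1$, and (2) for every $F\in\mathcal C_M(X)$ and every $n\in\Lambda$, the value $F(\hat T^{n+h}x)$ is the same for all $0\le h\le H-1$.
   Context: Fix integers $2\le q_1<q_2<\cdots$ such that $q_{k+1}>q_k^4+3q_k$ for every $k\ge1$. For $k\ge1$ put $q^{(0)}_k=q_{2k}$, $q^{(1)}_k=q_{2k+1}$, $q^{(2)}_k=q^{(0)}_k-1$, $q^{(3)}_k=q^{(1)}_k-1$, and $L^{(i)}_k=\lfloor q^{(i)}_{k+1}/(3q^{(i)}_k)\rfloor$. Let $s^{(i)}_k\in\{-1,0,1\}^{\mathbb N}$ (indices $n\ge1$) be given by $s^{(i)}_k(n)=1$ if $n=jq^{(i)}_k$ with $1\le j\le L^{(i)}_k$, $s^{(i)}_k(n)=-1$ if $n=jq^{(i)}_k$ with $L^{(i)}_k<j\le2L^{(i)}_k$, and $s^{(i)}_k(n)=0$ otherwise. For $w\in\{-1,0,1\}^{\mathbb N}$ and $p\in\mathbb N_0$ let $\sigma^{-p}w$ be defined by $(\sigma^{-p}w)(n)=0$ for $1\le n\le p$ and $(\sigma^{-p}w)(n)=w(n-p)$ for $n>p$. For $l\le m$ write $w|_l^m=(w_l,\dots,w_m)$. Let $R^{(i)}_k=\{(\sigma^{-p}s^{(i)}_k)|_{q^{(i)}_k}^{q^{(i)}_{k+1}-1}:p=0,1,\dots,q^{(i)}_k\}$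 and $P^{(i)}=\{y\in\{-1,0,1\}^{\mathbb N}: y(n)=0\text{ for }1\le n<q^{(i)}_1,\ y|_{q^{(i)}_k}^{q^{(i)}_{k+1}-1}\in R^{(i)}_k\text{ for all }k\ge1\}$. Let $Z=\{-1,0,1\}^{\mathbb N}\times\{-1,0,1\}^{\mathbb Z}$, where each factor carries the metric $d(u,v)=3^{-\min\{|m|:u_m\neq v_m\}}$ and $Z$ the maximum of the two. $\sigma$ is the left shift $(\sigma u)_m=u_{m+1}$ (invertible on $\{-1,0,1\}^{\mathbb Z}$). Define $T:Z\to Z$, $T(y,z)=(\sigma y,\sigma^{y_1}z)$, and $X_i=\overline{\bigcup_{n\ge0}T^n(P^{(i)}\times\{-1,0,1\}^{\mathbb Z})}$ for $i\in\{0,1,2,3\}$. Let $X=X_0\times X_1\times X_2\times X_3\times\{0,1,2,3\}$ with $\hat T(p^{(0)},p^{(1)},p^{(2)},p^{(3)},i)=(Tp^{(0)},Tp^{(1)},Tp^{(2)},Tp^{(3)},i)$. For $p=(y,z)\in Z$ and $M\in\mathbb N$, $[p]_M=((y_1,\dots,y_M),(z_{-M},\dots,z_M))$. Writing points of $X$ as $(x^{(0)},x^{(1)},x^{(2)},x^{(3)},i)$, $\mathcal C_M(X)$ denotes the set of functions $F:X\to\mathbb C$ whose value depends only on $([x^{(\ell)}]_M)_{0\le\ell\le3}$ and $i$. *)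

theory Defs
  imports Complex_Main
begin

text \<open>Points of Z: a one-sided sequence y indexed by n \<ge> 1 (normalised by y 0 = 0)
  and a two-sided sequence z, both with values in {-1,0,1}.\<close>

type_synonym pt = "(nat \<Rightarrow> int) \<times> (int \<Rightarrow> int)"

definition tri :: "int set" where "tri = {-1, 0, 1}"

definition Zsp :: "pt set" where
  "Zsp = {(y, z). y 0 = 0 \<and> (\<forall>n. y n \<in> tri) \<and> (\<forall>m. z m \<in> tri)}"

definition dN :: "(nat \<Rightarrow> int) \<Rightarrow> (nat \<Rightarrow> int) \<Rightarrow> real" where
  "dN u v = (if \<forall>n\<ge>1. u n = v n then 0
             else 3 powr (- real (LEAST n. n \<ge> 1 \<and> u n \<noteq> v n)))"

definition dZZ :: "(int \<Rightarrow> int) \<Rightarrow> (int \<Rightarrow> int) \<Rightarrow> real" where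
  "dZZ u v = (if \<forall>m. u m = v m then 0
              else 3 powr (- real (LEAST k. \<exists>m. nat \<bar>m\<bar> = k \<and> u m \<noteq> v m)))"

definition dist_pt :: "pt \<Rightarrow> pt \<Rightarrow> real" where
  "dist_pt p p' = max (dN (fst p) (fst p')) (dZZ (snd p) (snd p'))"

definition closureZ :: "pt set \<Rightarrow> pt set" where
  "closureZ S = {p \<in> Zsp. \<forall>e>0. \<exists>q\<in>S. dist_pt p q < e}"

definition shiftN :: "(nat \<Rightarrow> int) \<Rightarrow> (nat \<Rightarrow> int)" where
  "shiftN y = (\<lambda>n. if n = 0 then 0 else y (Suc n))"

definition shiftZ :: "int \<Rightarrow> (int \<Rightarrow> int) \<Rightarrow> (int \<Rightarrow> int)" where
  "shiftZ k z = (\<lambda>m. z (m + k))"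

definition Tmap :: "pt \<Rightarrow> pt" where
  "Tmap p = (shiftN (fst p), shiftZ (fst p 1) (snd p))"

definition qi :: "(nat \<Rightarrow> nat) \<Rightarrow> nat \<Rightarrow> nat \<Rightarrow> nat" where
  "qi q i k = (if i = 0 then q (2*k) else if i = 1 then q (2*k+1)
               else if i = 2 then q (2*k) - 1 else q (2*k+1) - 1)"

definition Li :: "(nat \<Rightarrow> nat) \<Rightarrow> nat \<Rightarrow> nat \<Rightarrow> nat" where
  "Li q i k = qi q i (k+1) div (3 * qi q i k)"

definition sblk :: "(nat \<Rightarrow> nat) \<Rightarrow> nat \<Rightarrow> nat \<Rightarrow> nat \<Rightarrow> int" where
  "sblk q i k n =
     (if \<exists>j. 1 \<le> j \<and> j \<le> Li q i k \<and> n = j * qi q i k then 1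
      else if \<exists>j. Li q i k < j \<and> j \<le> 2 * Li q i k \<and> n = j * qi q i k then -1
      else 0)"

definition shiftR :: "nat \<Rightarrow> (nat \<Rightarrow> int) \<Rightarrow> (nat \<Rightarrow> int)" where
  "shiftR p w = (\<lambda>n. if n \<le> p then 0 else w (n - p))"

definition restr :: "(nat \<Rightarrow> int) \<Rightarrow> nat \<Rightarrow> nat \<Rightarrow> int list" where
  "restr w l m = map w [l..<Suc m]"

definition Rset :: "(nat \<Rightarrow> nat) \<Rightarrow> nat \<Rightarrow> nat \<Rightarrow> int list set" where
  "Rset q i k = {restr (shiftR p (sblk q i k)) (qi q i k) (qi q i (k+1) - 1) | p. p \<le> qi q i k}"

definition Pset :: "(nat \<Rightarrow> nat) \<Rightarrow> nat \<Rightarrow> (nat \<Rightarrow> int) set" where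
  "Pset q i = {y. y 0 = 0 \<and> (\<forall>n. y n \<in> tri)
                 \<and> (\<forall>n. 1 \<le> n \<and> n < qi q i 1 \<longrightarrow> y n = 0)
                 \<and> (\<forall>k\<ge>1. restr y (qi q i k) (qi q i (k+1) - 1) \<in> Rset q i k)}"

definition Xi :: "(nat \<Rightarrow> nat) \<Rightarrow> nat \<Rightarrow> pt set" where
  "Xi q i = closureZ (\<Union>n. (Tmap ^^ n) ` (Pset q i \<times> {z. \<forall>m. z m \<in> tri}))"

type_synonym xpt = "pt \<times> pt \<times> pt \<times> pt \<times> nat"

definition Xsp :: "(nat \<Rightarrow> nat) \<Rightarrow> xpt set" where
  "Xsp q = Xi q 0 \<times> Xi q 1 \<times> Xi q 2 \<times> Xi q 3 \<times> {0, 1, 2, 3}"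

fun That :: "xpt \<Rightarrow> xpt" where
  "That (a, b, c, d, i) = (Tmap a, Tmap b, Tmap c, Tmap d, i)"

definition cyl :: "nat \<Rightarrow> pt \<Rightarrow> int list \<times> int list" where
  "cyl M p = (map (fst p) [1..<Suc M], map (snd p) [- int M..int M])"

fun sameM :: "nat \<Rightarrow> xpt \<Rightarrow> xpt \<Rightarrow> bool" where
  "sameM M (a, b, c, d, i) (a', b', c', d', i') =
     (cyl M a = cyl M a' \<and> cyl M b = cyl M b' \<and> cyl M c = cyl M c' \<and> cyl M d = cyl M d' \<and> i = i')"

definition CM :: "(nat \<Rightarrow> nat) \<Rightarrow> nat \<Rightarrow> (xpt \<Rightarrow> complex) set" where
  "CM q M = {F. \<forall>x\<in>Xsp q. \<forall>x'\<in>Xsp q. sameM M x x' \<longrightarrow> F x = F x'}"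

end

theory Submission
  imports Defs
begin

text \<open>The \<open>y\<close>-component of every point of \<open>X\<^sub>i\<close> is sparse: beyond \<open>q\<^sup>(\<^sup>i\<^sup>)\<^sub>J\<close> its
  nonzero entries are at least \<open>q\<^sup>(\<^sup>i\<^sup>)\<^sub>J\<close> apart. For points of \<open>P\<^sup>(\<^sup>i\<^sup>)\<close> this holds
  because the \<open>k\<close>-th block carries a single arithmetic progression of period \<open>q\<^sup>(\<^sup>i\<^sup>)\<^sub>k\<close>
  which ends long before the next block starts; it survives shifting and taking limits, since
  a point of the closure agrees with an orbit point on any finite window. Hence the set \<open>S\<close>
  of times where one of the four \<open>y\<close>-components is nonzero has density zero, and so has the
  set of \<open>n\<close> with \<open>S \<inter> (n, n + M + H] \<noteq> {}\<close>. For all other \<open>n\<close> and \<open>h < H\<close> the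
  iterates \<open>T\<^sup>n\<^sup>+\<^sup>h\<close> do not move the \<open>z\<close>-components (the shift exponent \<open>y\<^sub>1\<close> is \<open>0\<close>)
  and see only zeros among the first \<open>M\<close> coordinates of \<open>y\<close>, so all \<open>M\<close>-cylinders agree.\<close>

definition density_zero :: "nat set \<Rightarrow> bool" where
  "density_zero S \<longleftrightarrow> (\<lambda>N. real (card (S \<inter> {1..N})) / real N) \<longlonglongrightarrow> 0"

lemma density_zero_if_card_le:
  assumes le: "\<And>N. card (S \<inter> {1..N}) \<le> f N"
    and f: "(\<lambda>N. real (f N) / real N) \<longlonglongrightarrow> 0"
  shows "density_zero S"
  unfolding density_zero_def
proof (rule tendsto_sandwich[OF _ _ tendsto_const f])
  show "\<forall>\<^sub>F N in sequentially. real (card (S \<inter> {1..N})) / real N \<le> real (f N) / real N"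
    using le by (intro always_eventually allI divide_right_mono) simp_all
qed simp

lemma density_zero_le:
  assumes le: "\<And>N. card (S \<inter> {1..N}) \<le> card (T \<inter> {1..N}) + c" and T: "density_zero T"
  shows "density_zero S"
proof (rule density_zero_if_card_le[OF le])
  have "(\<lambda>N. real (card (T \<inter> {1..N})) / real N + real c / real N) \<longlonglongrightarrow> 0 + 0"
    using T unfolding density_zero_def by (intro tendsto_add lim_const_over_n)
  then show "(\<lambda>N. real (card (T \<inter> {1..N}) + c) / real N) \<longlonglongrightarrow> 0"
    by (simp add: add_divide_distrib)
qed

lemma density_zero_empty: "density_zero {}"
  by (simp add: density_zero_def)

lemma density_zero_finite: "finite S \<Longrightarrow> density_zero S"
  by (rule density_zero_le[of _ "{}" "card S"]) (auto intro: card_mono simp: density_zero_empty)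

lemma density_zero_shift:
  assumes "density_zero S"
  shows "density_zero {n. n + e \<in> S}"
proof (rule density_zero_le[OF _ assms])
  fix N
  have "(\<lambda>n. n + e) ` ({n. n + e \<in> S} \<inter> {1..N}) \<subseteq> (S \<inter> {1..N}) \<union> {N<..N + e}"
    by auto
  then have "card ({n. n + e \<in> S} \<inter> {1..N}) \<le> card ((S \<inter> {1..N}) \<union> {N<..N + e})"
    by (subst card_image[symmetric, of "\<lambda>n. n + e"]) (auto intro: card_mono)
  also have "\<dots> \<le> card (S \<inter> {1..N}) + e"
    using card_Un_le[of "S \<inter> {1..N}" "{N<..N + e}"] by simp
  finally show "card ({n. n + e \<in> S} \<inter> {1..N}) \<le> card (S \<inter> {1..N}) + e" .
qed

lemma density_zero_Un:
  assumes "density_zero S" "density_zero T"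
  shows "density_zero (S \<union> T)"
proof (rule density_zero_if_card_le)
  show "card ((S \<union> T) \<inter> {1..N}) \<le> card (S \<inter> {1..N}) + card (T \<inter> {1..N})" for N
    by (metis Int_Un_distrib2 card_Un_le)
  have "(\<lambda>N. real (card (S \<inter> {1..N})) / real N + real (card (T \<inter> {1..N})) / real N) \<longlonglongrightarrow> 0 + 0"
    using assms unfolding density_zero_def by (intro tendsto_add)
  then show "(\<lambda>N. real (card (S \<inter> {1..N}) + card (T \<inter> {1..N})) / real N) \<longlonglongrightarrow> 0"
    by (simp add: add_divide_distrib)
qed

lemma density_zero_UN:
  "finite I \<Longrightarrow> (\<And>i. i \<in> I \<Longrightarrow> density_zero (A i)) \<Longrightarrow> density_zero (\<Union>i\<in>I. A i)"
  by (induction I rule: finite_induct) (auto intro: density_zero_Un simp: density_zero_empty)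

lemma card_gapped_le:
  assumes D: "1 \<le> D"
    and gap: "\<And>t t'. A \<le> t \<Longrightarrow> t < t' \<Longrightarrow> t \<in> S \<Longrightarrow> t' \<in> S \<Longrightarrow> D \<le> t' - t"
  shows "card (S \<inter> {1..N}) \<le> A + N div D + 1"
proof -
  have "inj_on (\<lambda>t. t div D) (S \<inter> {A..N})"
  proof (rule linorder_inj_onI')
    fix t t' assume "t < t'" "t \<in> S \<inter> {A..N}" "t' \<in> S \<inter> {A..N}"
    then have "t + D \<le> t'" using gap by fastforce
    then have "t div D + 1 \<le> t' div D"
      using D div_le_mono[of "t + D" t' D] by simp
    then show "t div D \<noteq> t' div D" by simp
  qed
  moreover have "(\<lambda>t. t div D) ` (S \<inter> {A..N}) \<subseteq> {0..N div D}"
    by (auto intro: div_le_mono)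
  ultimately have "card (S \<inter> {A..N}) \<le> N div D + 1"
    using card_inj_on_le[of "\<lambda>t. t div D" "S \<inter> {A..N}" "{0..N div D}"] by simp
  moreover have "card (S \<inter> {1..N}) \<le> card ({1..<A} \<union> (S \<inter> {A..N}))"
    by (intro card_mono) auto
  moreover have "card ({1..<A} \<union> (S \<inter> {A..N})) \<le> card {1..<A} + card (S \<inter> {A..N})"
    by (rule card_Un_le)
  ultimately show ?thesis by simp
qed

lemma density_zero_if_gapped:
  assumes "\<And>D. 1 \<le> D \<Longrightarrow> \<exists>A. \<forall>t t'. A \<le> t \<longrightarrow> t < t' \<longrightarrow> t \<in> S \<longrightarrow> t' \<in> S \<longrightarrow> D \<le> t' - t"
  shows "density_zero S"
  unfolding density_zero_def
proof (rule order_tendstoI)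
  fix r :: real assume r: "0 < r"
  define D where "D = nat \<lceil>2 / r\<rceil> + 1"
  have D: "1 \<le> D" "2 / r < real D" unfolding D_def by linarith+
  obtain A where "\<forall>t t'. A \<le> t \<longrightarrow> t < t' \<longrightarrow> t \<in> S \<longrightarrow> t' \<in> S \<longrightarrow> D \<le> t' - t"
    using assms D(1) by blast
  then have bound: "card (S \<inter> {1..N}) \<le> A + 1 + N div D" for N
    using card_gapped_le[OF D(1)] by fastforce
  have "\<forall>\<^sub>F N in sequentially. real (A + 1) / real N < r / 2"
    using r by (intro order_tendstoD(2)[OF lim_const_over_n]) simp
  then show "\<forall>\<^sub>F N in sequentially. real (card (S \<inter> {1..N})) / real N < r"
    using eventually_gt_at_top[of 0]
  proof eventually_elim
    case (elim N)
    have "1 / real D < r / 2" using D r by (simp add: field_simps)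
    have "real (N div D) / real N \<le> 1 / real D"
      using of_nat_div_le_of_nat[of N D] elim(2) by (simp add: field_simps)
    have "real (card (S \<inter> {1..N})) / real N \<le> real (A + 1) / real N + real (N div D) / real N"
      using bound[of N] by (auto simp: add_divide_distrib [symmetric] intro!: divide_right_mono
          simp flip: of_nat_add)
    then show ?case using elim(1) \<open>1 / real D < r / 2\<close> \<open>real (N div D) / real N \<le> 1 / real D\<close>
      by linarith
  qed
next
  fix r :: real assume "r < 0"
  then show "\<forall>\<^sub>F N in sequentially. r < real (card (S \<inter> {1..N})) / real N"
    by (intro always_eventually allI less_le_trans[OF \<open>r < 0\<close>]) simp
qed

lemma density_one_if_compl_density_zero:
  assumes "density_zero (- \<Lambda>)"
  shows "(\<lambda>N. real (card ({1..N} \<inter> \<Lambda>)) / real N) \<longlonglongrightarrow> 1"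
proof -
  have "1 - real (card (- \<Lambda> \<inter> {1..N})) / real N = real (card ({1..N} \<inter> \<Lambda>)) / real N"
    if "1 \<le> N" for N
  proof -
    have "card ({1..N} \<inter> \<Lambda>) + card (- \<Lambda> \<inter> {1..N}) = N"
      using card_Un_disjoint[of "{1..N} \<inter> \<Lambda>" "- \<Lambda> \<inter> {1..N}"]
      by (simp add: Int_commute flip: Int_Un_distrib2)
    then show ?thesis using that by (simp add: field_simps flip: of_nat_add)
  qed
  then have "\<forall>\<^sub>F N in sequentially.
      1 - real (card (- \<Lambda> \<inter> {1..N})) / real N = real (card ({1..N} \<inter> \<Lambda>)) / real N"
    unfolding eventually_at_top_linorder by blast
  moreover have "(\<lambda>N. 1 - real (card (- \<Lambda> \<inter> {1..N})) / real N) \<longlonglongrightarrow> 1 - 0"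
    using assms unfolding density_zero_def by (intro tendsto_diff tendsto_const)
  ultimately show ?thesis
    using Lim_transform_eventually by fastforce
qed

definition lacunary :: "(nat \<Rightarrow> nat) \<Rightarrow> bool" where
  "lacunary f \<longleftrightarrow> (\<forall>k\<ge>1. 1 \<le> f k \<and> 6 * f k \<le> f (Suc k))"

lemma lacunary_qi:
  fixes q :: "nat \<Rightarrow> nat"
  assumes q1: "2 \<le> q 1" and incr: "\<forall>k\<ge>1. q k < q (Suc k)"
    and growth: "\<forall>k\<ge>1. q (Suc k) > q k ^ 4 + 3 * q k"
  shows "lacunary (qi q i)"
proof -
  have q2: "2 \<le> q k" if "1 \<le> k" for k
    using that
  proof (induction k rule: dec_induct)
    case (step n)
    have "q n < q (Suc n)" using incr step.hyps(1) by simp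
    with step.IH show ?case by simp
  qed (use q1 in simp)
  have q4: "4 * q k \<le> q (Suc k)" if "1 \<le> k" for k
  proof -
    have "q k \<le> q k ^ 4" using q2[OF that] by (intro self_le_power) auto
    then show ?thesis using growth that by fastforce
  qed
  have "1 \<le> qi q i k \<and> 6 * qi q i k \<le> qi q i (Suc k)" if "1 \<le> k" for k
  proof -
    have k2: "2 * Suc k = Suc (Suc (2 * k))" by simp
    show ?thesis
      using q2[of "2 * k"] q4[of "2 * k"] q4[of "Suc (2 * k)"] q4[of "Suc (Suc (2 * k))"] that
      unfolding qi_def k2 by auto
  qed
  then show ?thesis unfolding lacunary_def by blast
qed

lemma lacunary_mono:
  assumes "lacunary f" "1 \<le> m" "m \<le> n"
  shows "f m \<le> f n"
  using assms(3)
proof (induction n rule: dec_induct)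
  case (step n)
  then have "6 * f n \<le> f (Suc n)" using assms(1,2) unfolding lacunary_def by simp
  with step.IH show ?case by linarith
qed simp

lemma lacunary_ge_self:
  assumes "lacunary f" "1 \<le> n"
  shows "n \<le> f n"
  using assms(2)
proof (induction n rule: dec_induct)
  case (step n)
  then show ?case using assms(1) unfolding lacunary_def by fastforce
qed (use assms(1) in \<open>simp add: lacunary_def\<close>)

lemma lacunary_block:
  assumes f: "lacunary f" and n: "f 1 \<le> n"
  shows "\<exists>k\<ge>1. f k \<le> n \<and> n < f (Suc k)"
proof (rule ccontr)
  assume none: "\<not> ?thesis"
  have "f k \<le> n" if "1 \<le> k" for k
    using that by (induction k rule: dec_induct) (use n none in \<open>auto simp: not_less\<close>)
  then have "f (Suc n) \<le> n" by simp
  with lacunary_ge_self[OF f, of "Suc n"] show False by simp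
qed

lemma Pset_block_support:
  assumes "y \<in> Pset q i" "1 \<le> k"
  obtains p where "p \<le> qi q i k"
    and "\<And>t. qi q i k \<le> t \<Longrightarrow> t < qi q i (Suc k) \<Longrightarrow> y t \<noteq> 0 \<Longrightarrow>
           \<exists>j. 1 \<le> j \<and> j \<le> 2 * Li q i k \<and> t = p + j * qi q i k"
proof -
  obtain p where p: "p \<le> qi q i k"
    and eq: "restr y (qi q i k) (qi q i (k+1) - 1) = restr (shiftR p (sblk q i k)) (qi q i k) (qi q i (k+1) - 1)"
    using assms unfolding Pset_def Rset_def by blast
  have "\<exists>j. 1 \<le> j \<and> j \<le> 2 * Li q i k \<and> t = p + j * qi q i k"
    if t: "qi q i k \<le> t" "t < qi q i (Suc k)" and nz: "y t \<noteq> 0" for t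
  proof -
    have "y t = shiftR p (sblk q i k) t"
      using eq t unfolding restr_def map_eq_conv by fastforce
    then have "p < t" and "sblk q i k (t - p) \<noteq> 0"
      using nz unfolding shiftR_def by (auto split: if_splits)
    then obtain j where "1 \<le> j" "j \<le> 2 * Li q i k" "t - p = j * qi q i k"
      unfolding sblk_def by (auto split: if_splits)
    with \<open>p < t\<close> show ?thesis by (intro exI[of _ j]) auto
  qed
  with p that show ?thesis by blast
qed

lemma Pset_gap_from_block:
  assumes f: "lacunary (qi q i)" and y: "y \<in> Pset q i" and k: "1 \<le> k"
    and t: "qi q i k \<le> t" "t < qi q i (Suc k)" "t < t'" and nz: "y t \<noteq> 0" "y t' \<noteq> 0"
  shows "qi q i k \<le> t' - t"
proof -
  define Q where "Q = qi q i"
  obtain p where p: "p \<le> Q k" and supp: "\<And>s. Q k \<le> s \<Longrightarrow> s < Q (Suc k) \<Longrightarrow> y s \<noteq> 0 \<Longrightarrow>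
      \<exists>j. 1 \<le> j \<and> j \<le> 2 * Li q i k \<and> s = p + j * Q k"
    using Pset_block_support[OF y k] unfolding Q_def by blast
  obtain j where j: "j \<le> 2 * Li q i k" "t = p + j * Q k"
    using supp t nz(1) unfolding Q_def by blast
  have "Q k \<le> t' - t"
  proof (cases "t' < Q (Suc k)")
    case True
    moreover have "Q k \<le> t'" using t(1,3) unfolding Q_def by simp
    ultimately obtain j' where j': "t' = p + j' * Q k" using supp nz(2) by blast
    with j(2) t(3) have "j * Q k < j' * Q k" by simp
    then have "j < j'" by simp
    then have "(j + 1) * Q k \<le> j' * Q k" by (intro mult_le_mono1) simp
    then show ?thesis using j(2) j' by (simp add: algebra_simps)
  next
    case False
    \<comment> \<open>the support in block \<open>k\<close> ends by \<open>Q k + (2/3) Q (k+1)\<close>, and \<open>Q k \<le> Q (k+1) / 6\<close>\<close>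
    have "Li q i k * (3 * Q k) \<le> Q (Suc k)"
      unfolding Li_def Q_def by (simp add: div_times_less_eq_dividend)
    moreover have "j * Q k \<le> 2 * Li q i k * Q k"
      using j(1) by simp
    moreover have "6 * Q k \<le> Q (Suc k)" using f k unfolding lacunary_def Q_def by blast
    ultimately show ?thesis using False p j(2) by linarith
  qed
  then show ?thesis by (simp add: Q_def)
qed

lemma Pset_gap:
  assumes f: "lacunary (qi q i)" and y: "y \<in> Pset q i" and J: "1 \<le> J"
    and t: "qi q i J \<le> t" "t < t'" and nz: "y t \<noteq> 0" "y t' \<noteq> 0"
  shows "qi q i J \<le> t' - t"
proof -
  have "qi q i 1 \<le> t" using lacunary_mono[OF f order.refl J] t(1) by simp
  then obtain k where k: "1 \<le> k" "qi q i k \<le> t" "t < qi q i (Suc k)"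
    using lacunary_block[OF f] by blast
  have "J \<le> k"
    using lacunary_mono[OF f, of "Suc k" J] k t(1) by fastforce
  then have "qi q i J \<le> qi q i k" by (rule lacunary_mono[OF f J])
  also have "\<dots> \<le> t' - t" using Pset_gap_from_block[OF f y k t(2) nz] k by simp
  finally show ?thesis .
qed

lemma dN_less_iff: "dN u v < 3 powr - real L \<longleftrightarrow> (\<forall>n. 1 \<le> n \<and> n \<le> L \<longrightarrow> u n = v n)"
proof (cases "\<forall>n\<ge>1. u n = v n")
  case False
  define l where "l = (LEAST n. 1 \<le> n \<and> u n \<noteq> v n)"
  have l: "1 \<le> l" "u l \<noteq> v l"
    using LeastI_ex[of "\<lambda>n. 1 \<le> n \<and> u n \<noteq> v n"] False unfolding l_def by auto
  have below: "u n = v n" if "1 \<le> n" "n < l" for n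
    using not_less_Least[of n "\<lambda>n. 1 \<le> n \<and> u n \<noteq> v n"] that unfolding l_def by auto
  have "dN u v < 3 powr - real L \<longleftrightarrow> L < l"
    unfolding dN_def if_not_P[OF False] l_def by simp
  also have "\<dots> \<longleftrightarrow> (\<forall>n. 1 \<le> n \<and> n \<le> L \<longrightarrow> u n = v n)"
  proof
    assume "\<forall>n. 1 \<le> n \<and> n \<le> L \<longrightarrow> u n = v n"
    with l show "L < l" by (meson not_less)
  qed (use below in auto)
  finally show ?thesis .
qed (simp add: dN_def)

lemma dZZ_less_iff: "dZZ u v < 3 powr - real L \<longleftrightarrow> (\<forall>m. \<bar>m\<bar> \<le> int L \<longrightarrow> u m = v m)"
proof (cases "\<forall>m. u m = v m")
  case False
  define P where "P = (\<lambda>k. \<exists>m. nat \<bar>m\<bar> = k \<and> u m \<noteq> v m)"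
  define l where "l = Least P"
  have l: "P l"
    using LeastI_ex[of P] False unfolding l_def P_def by auto
  have below: "u m = v m" if "nat \<bar>m\<bar> < l" for m
    using not_less_Least[of "nat \<bar>m\<bar>" P] that unfolding l_def P_def by auto
  have "dZZ u v < 3 powr - real L \<longleftrightarrow> L < l"
    unfolding dZZ_def if_not_P[OF False] l_def P_def by simp
  also have "\<dots> \<longleftrightarrow> (\<forall>m. \<bar>m\<bar> \<le> int L \<longrightarrow> u m = v m)"
  proof
    assume "\<forall>m. \<bar>m\<bar> \<le> int L \<longrightarrow> u m = v m"
    with l show "L < l" unfolding P_def by force
  qed (use below in force)
  finally show ?thesis .
qed (simp add: dZZ_def)

lemma cyl_eq_iff:
  "cyl L p = cyl L u \<longleftrightarrow>
     (\<forall>n. 1 \<le> n \<and> n \<le> L \<longrightarrow> fst p n = fst u n) \<and> (\<forall>m. \<bar>m\<bar> \<le> int L \<longrightarrow> snd p m = snd u m)"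
  by (auto simp: cyl_def map_eq_conv abs_le_iff)

lemma dist_pt_less_iff_cyl_eq: "dist_pt p u < 3 powr - real L \<longleftrightarrow> cyl L p = cyl L u"
  by (simp add: dist_pt_def cyl_eq_iff dN_less_iff dZZ_less_iff)

lemma closureZ_iff: "p \<in> closureZ S \<longleftrightarrow> p \<in> Zsp \<and> (\<forall>L. \<exists>u\<in>S. cyl L p = cyl L u)"
proof -
  have "(\<forall>e>0. \<exists>u\<in>S. dist_pt p u < e) \<longleftrightarrow> (\<forall>L. \<exists>u\<in>S. dist_pt p u < 3 powr - real L)"
  proof
    assume "\<forall>L. \<exists>u\<in>S. dist_pt p u < 3 powr - real L"
    moreover have "\<exists>L. 3 powr - real L < e" if e: "e > 0" for e :: real
    proof -
      obtain L where "(1 / 3) ^ L < e" using real_arch_pow_inv[OF e, of "1 / 3"] by auto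
      then show ?thesis by (auto simp: powr_minus powr_realpow power_one_over inverse_eq_divide)
    qed
    ultimately show "\<forall>e>0. \<exists>u\<in>S. dist_pt p u < e" by (meson order.strict_trans)
  qed simp
  then show ?thesis by (simp add: closureZ_def dist_pt_less_iff_cyl_eq)
qed

lemma Tmap_Zsp: "p \<in> Zsp \<Longrightarrow> Tmap p \<in> Zsp"
  unfolding Zsp_def Tmap_def shiftN_def shiftZ_def tri_def by auto

lemma cyl_Tmap:
  assumes p: "p \<in> Zsp" and eq: "cyl (Suc L) p = cyl (Suc L) u"
  shows "cyl L (Tmap p) = cyl L (Tmap u)"
proof -
  have "fst p 1 \<in> tri"
    using p unfolding Zsp_def by auto
  have "fst p 1 = fst u 1"
    using eq unfolding cyl_eq_iff by simp
  \<comment> \<open>the \<open>z\<close>-shift by \<open>y\<^sub>1 \<in> {-1,0,1}\<close> moves the window \<open>[-L, L]\<close> into \<open>[-L-1, L+1]\<close>\<close>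
  moreover have "snd p (m + fst p 1) = snd u (m + fst p 1)" if "\<bar>m\<bar> \<le> int L" for m
    using eq that \<open>fst p 1 \<in> tri\<close> unfolding cyl_eq_iff tri_def by auto
  ultimately show ?thesis
    using eq unfolding cyl_eq_iff Tmap_def shiftN_def shiftZ_def by auto
qed

lemma closureZ_Tmap:
  assumes S: "\<And>u. u \<in> S \<Longrightarrow> Tmap u \<in> S" and p: "p \<in> closureZ S"
  shows "Tmap p \<in> closureZ S"
proof -
  have "\<exists>u\<in>S. cyl L (Tmap p) = cyl L u" for L
  proof -
    obtain u where "u \<in> S" "cyl (Suc L) p = cyl (Suc L) u" using p closureZ_iff by blast
    then show ?thesis using cyl_Tmap p S closureZ_iff by blast
  qed
  then show ?thesis using Tmap_Zsp p closureZ_iff by blast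
qed

lemma Xi_Tmap: "p \<in> Xi q i \<Longrightarrow> Tmap p \<in> Xi q i"
  unfolding Xi_def
proof (rule closureZ_Tmap)
  fix u assume "u \<in> (\<Union>n. (Tmap ^^ n) ` (Pset q i \<times> {z. \<forall>m. z m \<in> tri}))"
  then obtain k w where "w \<in> Pset q i \<times> {z. \<forall>m. z m \<in> tri}" "u = (Tmap ^^ k) w"
    by blast
  then have "Tmap u \<in> (Tmap ^^ Suc k) ` (Pset q i \<times> {z. \<forall>m. z m \<in> tri})" by simp
  then show "Tmap u \<in> (\<Union>n. (Tmap ^^ n) ` (Pset q i \<times> {z. \<forall>m. z m \<in> tri}))" by blast
qed

lemma Xi_Tmap_pow: "p \<in> Xi q i \<Longrightarrow> (Tmap ^^ n) p \<in> Xi q i"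
  by (induction n) (simp_all add: Xi_Tmap)

lemma That_pow: "(That ^^ n) (a, b, c, d, i) = ((Tmap ^^ n) a, (Tmap ^^ n) b, (Tmap ^^ n) c, (Tmap ^^ n) d, i)"
  by (induction n) simp_all

lemma Xsp_That_pow: "x \<in> Xsp q \<Longrightarrow> (That ^^ n) x \<in> Xsp q"
  by (cases x) (simp add: Xsp_def That_pow Xi_Tmap_pow)

lemma fst_Tmap_pow: "1 \<le> t \<Longrightarrow> fst ((Tmap ^^ n) p) t = fst p (t + n)"
  by (induction n arbitrary: t) (simp_all add: Tmap_def shiftN_def)

lemma Xi_gap:
  assumes f: "lacunary (qi q i)" and p: "p \<in> Xi q i" and J: "1 \<le> J"
    and t: "qi q i J \<le> t" "t < t'" and nz: "fst p t \<noteq> 0" "fst p t' \<noteq> 0"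
  shows "qi q i J \<le> t' - t"
proof -
  obtain u where "u \<in> (\<Union>n. (Tmap ^^ n) ` (Pset q i \<times> {z. \<forall>m. z m \<in> tri}))" and "cyl t' p = cyl t' u"
    using p closureZ_iff unfolding Xi_def by blast
  then obtain n y z where y: "y \<in> Pset q i" and u: "u = (Tmap ^^ n) (y, z)"
    and eq: "\<forall>s. 1 \<le> s \<and> s \<le> t' \<longrightarrow> fst p s = fst u s"
    unfolding cyl_eq_iff by blast
  have "1 \<le> t" using t(1) J f unfolding lacunary_def by fastforce
  then have "y (t + n) \<noteq> 0" "y (t' + n) \<noteq> 0"
    using nz eq t(2) by (simp_all add: u fst_Tmap_pow)
  from Pset_gap[OF f y J _ _ this] t show ?thesis by simp
qed

fun ysupport :: "xpt \<Rightarrow> nat set" where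
  "ysupport (a, b, c, d, i) = {t. fst a t \<noteq> 0} \<union> {t. fst b t \<noteq> 0} \<union> {t. fst c t \<noteq> 0} \<union> {t. fst d t \<noteq> 0}"

lemma Xi_support_density_zero:
  assumes f: "lacunary (qi q i)" and p: "p \<in> Xi q i"
  shows "density_zero {t. fst p t \<noteq> 0}"
proof (rule density_zero_if_gapped)
  fix D :: nat assume D: "1 \<le> D"
  have "D \<le> t' - t" if "qi q i D \<le> t" "t < t'" "fst p t \<noteq> 0" "fst p t' \<noteq> 0" for t t'
    using Xi_gap[OF f p D that] lacunary_ge_self[OF f D] by linarith
  then show "\<exists>A. \<forall>t t'. A \<le> t \<longrightarrow> t < t' \<longrightarrow> t \<in> {t. fst p t \<noteq> 0} \<longrightarrow>
      t' \<in> {t. fst p t \<noteq> 0} \<longrightarrow> D \<le> t' - t"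
    by blast
qed

lemma Xsp_ysupport_density_zero:
  fixes q :: "nat \<Rightarrow> nat"
  assumes "2 \<le> q 1" "\<forall>k\<ge>1. q k < q (Suc k)" "\<forall>k\<ge>1. q (Suc k) > q k ^ 4 + 3 * q k"
    and x: "x \<in> Xsp q"
  shows "density_zero (ysupport x)"
proof -
  obtain a b c d i where x': "x = (a, b, c, d, i)" by (cases x)
  with x have comps: "a \<in> Xi q 0" "b \<in> Xi q 1" "c \<in> Xi q 2" "d \<in> Xi q 3"
    by (auto simp: Xsp_def)
  show ?thesis unfolding x' ysupport.simps
    by (intro density_zero_Un Xi_support_density_zero[OF lacunary_qi[OF assms(1-3)]]) (rule comps)+
qed

lemma density_one_window_disjoint:
  assumes "density_zero S"
  shows "(\<lambda>N. real (card ({1..N} \<inter> {n. 1 \<le> n \<and> (\<forall>e\<in>{1..K}. n + e \<notin> S)})) / real N) \<longlonglongrightarrow> 1"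
proof (rule density_one_if_compl_density_zero)
  have "density_zero ({0} \<union> (\<Union>e\<in>{1..K}. {n. n + e \<in> S}))"
    using assms by (intro density_zero_Un[OF density_zero_finite] density_zero_UN density_zero_shift) auto
  moreover have "- {n. 1 \<le> n \<and> (\<forall>e\<in>{1..K}. n + e \<notin> S)} = {0} \<union> (\<Union>e\<in>{1..K}. {n. n + e \<in> S})"
    by auto
  ultimately show "density_zero (- {n. 1 \<le> n \<and> (\<forall>e\<in>{1..K}. n + e \<notin> S)})" by simp
qed

lemma cyl_Tmap_pow_eq:
  assumes zero: "\<And>t. n < t \<Longrightarrow> t \<le> n + M + h \<Longrightarrow> fst p t = 0"
  shows "cyl M ((Tmap ^^ (n + h)) p) = cyl M ((Tmap ^^ n) p)"
proof -
  have "snd ((Tmap ^^ (n + j)) p) = snd ((Tmap ^^ n) p)" if "j \<le> h" for j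
    using that
  proof (induction j)
    case (Suc j)
    have "fst ((Tmap ^^ (n + j)) p) 1 = 0"
      using zero Suc.prems by (simp add: fst_Tmap_pow)
    then have "snd ((Tmap ^^ (n + Suc j)) p) = snd ((Tmap ^^ (n + j)) p)"
      by (simp add: Tmap_def shiftZ_def)
    then show ?case using Suc by simp
  qed simp
  moreover have "fst ((Tmap ^^ (n + h)) p) t = fst ((Tmap ^^ n) p) t" if "1 \<le> t" "t \<le> M" for t
    using zero that by (simp add: fst_Tmap_pow)
  ultimately show ?thesis by (simp add: cyl_eq_iff)
qed

lemma CM_That_pow_eq:
  assumes F: "F \<in> CM q M" and x: "x \<in> Xsp q"
    and zero: "\<And>t. n < t \<Longrightarrow> t \<le> n + M + h \<Longrightarrow> t \<notin> ysupport x"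
  shows "F ((That ^^ (n + h)) x) = F ((That ^^ n) x)"
proof -
  have "sameM M ((That ^^ (n + h)) x) ((That ^^ n) x)"
    using zero by (cases x) (simp add: That_pow cyl_Tmap_pow_eq)
  then show ?thesis
    using F Xsp_That_pow[OF x] unfolding CM_def by blast
qed

theorem mainTheorem12:
  fixes q :: "nat \<Rightarrow> nat" and M H :: nat and x :: xpt
  assumes "2 \<le> q 1"
    and "\<forall>k\<ge>1. q k < q (Suc k)"
    and "\<forall>k\<ge>1. q (Suc k) > q k ^ 4 + 3 * q k"
    and "M \<ge> 1" and "H \<ge> 1"
    and "x \<in> Xsp q"
  shows "\<exists>\<Lambda>. \<Lambda> \<subseteq> {1..} \<and>
           (\<lambda>N. real (card ({1..N} \<inter> \<Lambda>)) / real N) \<longlonglongrightarrow> 1 \<and>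
           (\<forall>F\<in>CM q M. \<forall>n\<in>\<Lambda>. \<forall>h<H. F ((That ^^ (n + h)) x) = F ((That ^^ n) x))"
proof -
  define \<Lambda> where "\<Lambda> = {n. 1 \<le> n \<and> (\<forall>e\<in>{1..M + H}. n + e \<notin> ysupport x)}"
  have "(\<lambda>N. real (card ({1..N} \<inter> \<Lambda>)) / real N) \<longlonglongrightarrow> 1"
    unfolding \<Lambda>_def using Xsp_ysupport_density_zero[OF assms(1-3,6)]
    by (rule density_one_window_disjoint)
  moreover have "F ((That ^^ (n + h)) x) = F ((That ^^ n) x)"
    if "F \<in> CM q M" "n \<in> \<Lambda>" "h < H" for F n h
  proof (rule CM_That_pow_eq[OF that(1) assms(6)])
    fix t assume t: "n < t" "t \<le> n + M + h"
    then have "t - n \<in> {1..M + H}" using \<open>h < H\<close> by auto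
    with \<open>n \<in> \<Lambda>\<close> have "n + (t - n) \<notin> ysupport x" unfolding \<Lambda>_def by blast
    with t show "t \<notin> ysupport x" by simp
  qed
  moreover have "\<Lambda> \<subseteq> {1..}" unfolding \<Lambda>_def by auto
  ultimately show ?thesis by blast
qed

end
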